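(* Let $V\subseteq\{0,1\}^n$ and $\preceq$ a term order on $\mathbb{R}[x_1,\dots,x_n]$. Then $\mathcal{S}_\preceq(V)=\mathcal{S}_\preceq(T_i(V))$ for every $i=1,\dots,n$.
   Context: $T_i$ is the reflection in the hyperplane $\{x_i=\tfrac12\}$, mapping $v\in\{0,1\}^n$ to $(v_1,\dots,v_{i-1},1-v_i,v_{i+1},\dots,v_n)$. $\mathcal{S}_\preceq(V)=\{\tau\subseteq[n]:\prod_{j\in\tau}x_j\notin\mathrm{in}_\preceq(I(V))\}$, where $I(V)$ is the vanishing ideal of $V$ and $\mathrm{in}_\preceq$ the initial ideal. *)

theory Defs
  imports Complex_Main "HOL-Library.Poly_Mapping"
begin

text \<open>Variable x_(j+1) of the paper is index j here (0-based).\<close>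

type_synonym mon = "nat \<Rightarrow>\<^sub>0 nat"
type_synonym rpoly = "mon \<Rightarrow>\<^sub>0 real"

definition mons :: "nat \<Rightarrow> mon set" where
  "mons n = {m. \<forall>j \<in> Poly_Mapping.keys m. j < n}"

definition polys :: "nat \<Rightarrow> rpoly set" where
  "polys n = {p. Poly_Mapping.keys p \<subseteq> mons n}"

definition cube :: "nat \<Rightarrow> (nat \<Rightarrow> real) set" where
  "cube n = {v. (\<forall>j<n. v j \<in> {0, 1}) \<and> (\<forall>j\<ge>n. v j = 0)}"

definition refl_T :: "nat \<Rightarrow> (nat \<Rightarrow> real) \<Rightarrow> (nat \<Rightarrow> real)" where
  "refl_T i v = v(i := 1 - v i)"

definition eval_mon :: "mon \<Rightarrow> (nat \<Rightarrow> real) \<Rightarrow> real" where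
  "eval_mon m v = (\<Prod>j \<in> Poly_Mapping.keys m. v j ^ Poly_Mapping.lookup m j)"

definition eval_poly :: "rpoly \<Rightarrow> (nat \<Rightarrow> real) \<Rightarrow> real" where
  "eval_poly p v = (\<Sum>m \<in> Poly_Mapping.keys p. Poly_Mapping.lookup p m * eval_mon m v)"

definition vanishing_ideal :: "nat \<Rightarrow> (nat \<Rightarrow> real) set \<Rightarrow> rpoly set" where
  "vanishing_ideal n V = {p \<in> polys n. \<forall>v \<in> V. eval_poly p v = 0}"

definition term_order :: "nat \<Rightarrow> (mon \<Rightarrow> mon \<Rightarrow> bool) \<Rightarrow> bool" where
  "term_order n le \<longleftrightarrow>
     (\<forall>a \<in> mons n. le a a) \<and>
     (\<forall>a \<in> mons n. \<forall>b \<in> mons n. le a b \<and> le b a \<longrightarrow> a = b) \<and>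
     (\<forall>a \<in> mons n. \<forall>b \<in> mons n. \<forall>c \<in> mons n. le a b \<and> le b c \<longrightarrow> le a c) \<and>
     (\<forall>a \<in> mons n. \<forall>b \<in> mons n. le a b \<or> le b a) \<and>
     (\<forall>a \<in> mons n. le 0 a) \<and>
     (\<forall>a \<in> mons n. \<forall>b \<in> mons n. \<forall>c \<in> mons n. le a b \<longrightarrow> le (a + c) (b + c))"

definition lead_mon :: "(mon \<Rightarrow> mon \<Rightarrow> bool) \<Rightarrow> rpoly \<Rightarrow> mon" where
  "lead_mon le p = (THE m. m \<in> Poly_Mapping.keys p \<and> (\<forall>m' \<in> Poly_Mapping.keys p. le m' m))"

inductive_set ideal_gen :: "nat \<Rightarrow> rpoly set \<Rightarrow> rpoly set" for n G where
  zero: "0 \<in> ideal_gen n G"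
| gen: "g \<in> G \<Longrightarrow> g \<in> ideal_gen n G"
| add: "p \<in> ideal_gen n G \<Longrightarrow> q \<in> ideal_gen n G \<Longrightarrow> p + q \<in> ideal_gen n G"
| mult: "q \<in> polys n \<Longrightarrow> p \<in> ideal_gen n G \<Longrightarrow> q * p \<in> ideal_gen n G"

definition initial_ideal :: "nat \<Rightarrow> (mon \<Rightarrow> mon \<Rightarrow> bool) \<Rightarrow> rpoly set \<Rightarrow> rpoly set" where
  "initial_ideal n le I =
     ideal_gen n {Poly_Mapping.single (lead_mon le p) 1 | p. p \<in> I \<and> p \<noteq> 0}"

definition sqfree_mon :: "nat set \<Rightarrow> rpoly" where
  "sqfree_mon \<tau> = Poly_Mapping.single (\<Sum>j \<in> \<tau>. Poly_Mapping.single j (1::nat)) 1"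

definition S_set :: "nat \<Rightarrow> (mon \<Rightarrow> mon \<Rightarrow> bool) \<Rightarrow> (nat \<Rightarrow> real) set \<Rightarrow> nat set set" where
  "S_set n le V = {\<tau>. \<tau> \<subseteq> {..<n} \<and>
      sqfree_mon \<tau> \<notin> initial_ideal n le (vanishing_ideal n V)}"

end

theory Submission
  imports Defs
begin

text \<open>The substitution x_i := 1 - x_i is an involution on polynomials that turns
  evaluation at v into evaluation at T_i(v); hence it maps I(V) into I(T_i(V)) and back.
  It preserves leading monomials: it sends x^M to x^M' (1 - x_i)^(M_i), where M' is M with
  the exponent of x_i set to 0, so every monomial it produces divides x^M and is not larger
  than x^M under a term order, while x^M itself reappears with coefficient (-1)^(M_i).
  Hence the two initial ideals have the same generators.\<close>

lemma term_order_antisym: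
  "term_order n le \<Longrightarrow> a \<in> mons n \<Longrightarrow> b \<in> mons n \<Longrightarrow> le a b \<Longrightarrow> le b a \<Longrightarrow> a = b"
  unfolding term_order_def by blast

lemma term_order_trans:
  "term_order n le \<Longrightarrow> a \<in> mons n \<Longrightarrow> b \<in> mons n \<Longrightarrow> c \<in> mons n \<Longrightarrow>
    le a b \<Longrightarrow> le b c \<Longrightarrow> le a c"
  unfolding term_order_def by blast

lemma term_order_le_add:
  assumes "term_order n le" "a \<in> mons n" "d \<in> mons n"
  shows "le a (a + d)"
proof -
  have "0 \<in> mons n" by (simp add: mons_def)
  then have "le (0 + a) (d + a)"
    using assms unfolding term_order_def by blast
  then show ?thesis by (simp add: add.commute)
qed

lemma term_order_ex_max:
  assumes "term_order n le" "finite K" "K \<noteq> {}" "K \<subseteq> mons n"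
  shows "\<exists>L\<in>K. \<forall>m\<in>K. le m L"
  using assms(2-4)
proof (induction K rule: finite_ne_induct)
  case (singleton x)
  then show ?case using assms(1) unfolding term_order_def by auto
next
  case (insert x F)
  then obtain L where L: "L \<in> F" "\<forall>m\<in>F. le m L" by auto
  show ?case
  proof (cases "le x L")
    case True
    then show ?thesis using L by auto
  next
    case False
    have x: "x \<in> mons n" and L_mons: "L \<in> mons n" using insert L by auto
    with False have "le L x" using assms(1) unfolding term_order_def by blast
    then have "\<forall>m\<in>F. le m x"
      using L insert term_order_trans[OF assms(1) _ L_mons x] by blast
    moreover have "le x x" using assms(1) x unfolding term_order_def by blast
    ultimately show ?thesis by auto
  qed
qed

lemma lead_mon_eqI:
  assumes "term_order n le" "Poly_Mapping.keys p \<subseteq> mons n"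
    and "L \<in> Poly_Mapping.keys p" "\<forall>m\<in>Poly_Mapping.keys p. le m L"
  shows "lead_mon le p = L"
  unfolding lead_mon_def
  using assms term_order_antisym[OF assms(1)] by (intro the_equality) blast+

lemma update_in_mons: "M \<in> mons n \<Longrightarrow> i < n \<Longrightarrow> Poly_Mapping.update i j M \<in> mons n"
  by (auto simp: mons_def keys_update split: if_splits)

lemma add_in_mons: "a \<in> mons n \<Longrightarrow> b \<in> mons n \<Longrightarrow> a + b \<in> mons n"
  unfolding mons_def using keys_add[of a b] by blast

lemma single_in_mons: "i < n \<Longrightarrow> Poly_Mapping.single i k \<in> mons n"
  by (simp add: mons_def)

lemma update_zero_add_single_lookup:
  "Poly_Mapping.update i 0 M + Poly_Mapping.single i (Poly_Mapping.lookup M i) = M"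
  by (intro poly_mapping_eqI) (simp add: lookup_update lookup_add lookup_single when_def)

lemma term_order_decrease_exponent_le:
  assumes "term_order n le" "M \<in> mons n" "i < n" "j \<le> Poly_Mapping.lookup M i"
  shows "le (Poly_Mapping.update i 0 M + Poly_Mapping.single i j) M"
proof -
  let ?B = "Poly_Mapping.update i 0 M"
  let ?d = "Poly_Mapping.single i (Poly_Mapping.lookup M i - j)"
  have "le (?B + Poly_Mapping.single i j) ((?B + Poly_Mapping.single i j) + ?d)"
    using assms(2,3)
    by (intro term_order_le_add[OF assms(1)])
      (simp_all add: add_in_mons update_in_mons single_in_mons)
  moreover have "(?B + Poly_Mapping.single i j) + ?d = M"
    using assms(4) update_zero_add_single_lookup[of i M]
    by (simp add: add.assoc flip: single_add)
  ultimately show ?thesis by simp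
qed

lemma eval_mon_eq_prod:
  assumes "finite S" "Poly_Mapping.keys m \<subseteq> S"
  shows "eval_mon m v = (\<Prod>j\<in>S. v j ^ Poly_Mapping.lookup m j)"
  unfolding eval_mon_def
  using assms by (intro prod.mono_neutral_left) (auto simp: in_keys_iff)

lemma eval_mon_add: "eval_mon (a + b) v = eval_mon a v * eval_mon b v"
proof -
  let ?S = "Poly_Mapping.keys a \<union> Poly_Mapping.keys b"
  have "eval_mon (a + b) v = (\<Prod>j\<in>?S. v j ^ Poly_Mapping.lookup (a + b) j)"
    by (rule eval_mon_eq_prod) (simp_all add: keys_add)
  also have "\<dots> = eval_mon a v * eval_mon b v"
    by (simp add: eval_mon_eq_prod[of ?S a] eval_mon_eq_prod[of ?S b] lookup_add power_add
        prod.distrib)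
  finally show ?thesis .
qed

lemma eval_mon_single: "eval_mon (Poly_Mapping.single i k) v = v i ^ k"
  by (subst eval_mon_eq_prod[of "{i}"]) auto

lemma eval_mon_cong:
  "(\<And>j. j \<in> Poly_Mapping.keys m \<Longrightarrow> v j = w j) \<Longrightarrow> eval_mon m v = eval_mon m w"
  unfolding eval_mon_def by simp

lemma eval_mon_refl_T:
  "eval_mon M (refl_T i v) =
    (1 - v i) ^ Poly_Mapping.lookup M i * eval_mon (Poly_Mapping.update i 0 M) v"
proof -
  have "eval_mon (Poly_Mapping.update i 0 M) (refl_T i v) =
      eval_mon (Poly_Mapping.update i 0 M) v"
    by (rule eval_mon_cong) (simp add: refl_T_def keys_update)
  then show ?thesis
    using eval_mon_add[of "Poly_Mapping.update i 0 M"
        "Poly_Mapping.single i (Poly_Mapping.lookup M i)"]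
    by (simp add: update_zero_add_single_lookup eval_mon_single refl_T_def)
qed

lemma eval_poly_eq_sum:
  assumes "finite S" "Poly_Mapping.keys p \<subseteq> S"
  shows "eval_poly p v = (\<Sum>m\<in>S. Poly_Mapping.lookup p m * eval_mon m v)"
  unfolding eval_poly_def
  using assms by (intro sum.mono_neutral_left) (auto simp: in_keys_iff)

lemma eval_poly_add: "eval_poly (p + q) v = eval_poly p v + eval_poly q v"
proof -
  let ?S = "Poly_Mapping.keys p \<union> Poly_Mapping.keys q"
  have "eval_poly (p + q) v = (\<Sum>m\<in>?S. Poly_Mapping.lookup (p + q) m * eval_mon m v)"
    by (rule eval_poly_eq_sum) (simp_all add: keys_add)
  also have "\<dots> = eval_poly p v + eval_poly q v"
    by (simp add: eval_poly_eq_sum[of ?S p] eval_poly_eq_sum[of ?S q] lookup_add distrib_right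
        sum.distrib)
  finally show ?thesis .
qed

lemma eval_poly_sum: "eval_poly (\<Sum>a\<in>A. f a) v = (\<Sum>a\<in>A. eval_poly (f a) v)"
  by (induction A rule: infinite_finite_induct) (simp_all add: eval_poly_add eval_poly_def[of 0])

lemma eval_poly_single: "eval_poly (Poly_Mapping.single m c) v = c * eval_mon m v"
  by (subst eval_poly_eq_sum[of "{m}"]) auto

text \<open>The substitution x_i := 1 - x_i, with (1 - x_i)^k expanded by the binomial theorem.\<close>

definition reflect_var :: "nat \<Rightarrow> rpoly \<Rightarrow> rpoly" where
  "reflect_var i f = (\<Sum>M\<in>Poly_Mapping.keys f. \<Sum>j\<le>Poly_Mapping.lookup M i.
      Poly_Mapping.single (Poly_Mapping.update i 0 M + Poly_Mapping.single i j)
        (Poly_Mapping.lookup f M * (-1) ^ j * of_nat (Poly_Mapping.lookup M i choose j)))"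

lemma eval_reflect_var: "eval_poly (reflect_var i f) v = eval_poly f (refl_T i v)"
proof -
  have binomial_term: "c * (-1) ^ j * of_nat (k choose j) * (e * x ^ j)
      = c * e * (of_nat (k choose j) * (- x) ^ j * 1 ^ (k - j))" for c e x :: real and j k
    unfolding power_minus[of x] power_one mult_1_right by (simp only: mult_ac)
  have "eval_poly (reflect_var i f) v = (\<Sum>M\<in>Poly_Mapping.keys f.
      Poly_Mapping.lookup f M * eval_mon (Poly_Mapping.update i 0 M) v *
      (\<Sum>j\<le>Poly_Mapping.lookup M i. of_nat (Poly_Mapping.lookup M i choose j) * (- v i) ^ j *
        1 ^ (Poly_Mapping.lookup M i - j)))"
    unfolding reflect_var_def eval_poly_sum eval_poly_single eval_mon_add eval_mon_single
      sum_distrib_left binomial_term ..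
  also have "\<dots> = eval_poly f (refl_T i v)"
    unfolding eval_poly_def eval_mon_refl_T binomial_ring[symmetric]
    by (intro sum.cong refl) (simp add: mult_ac)
  finally show ?thesis .
qed

lemma keys_reflect_var:
  "Poly_Mapping.keys (reflect_var i f) \<subseteq>
     (\<Union>M\<in>Poly_Mapping.keys f. \<Union>j\<le>Poly_Mapping.lookup M i.
        {Poly_Mapping.update i 0 M + Poly_Mapping.single i j})"
  unfolding reflect_var_def
  by (rule order_trans[OF keys_sum] UN_mono order_refl)+ simp

lemma reflect_var_in_polys: "f \<in> polys n \<Longrightarrow> i < n \<Longrightarrow> reflect_var i f \<in> polys n"
  using keys_reflect_var[of i f]
  by (fastforce simp: polys_def intro: add_in_mons update_in_mons single_in_mons)

lemma lookup_reflect_var_lead: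
  assumes "term_order n le" "f \<in> polys n" "i < n"
    and L: "L \<in> Poly_Mapping.keys f" "\<forall>m\<in>Poly_Mapping.keys f. le m L"
  shows "Poly_Mapping.lookup (reflect_var i f) L =
    (-1) ^ Poly_Mapping.lookup L i * Poly_Mapping.lookup f L"
proof -
  define c where
    "c M j = Poly_Mapping.lookup f M * (-1) ^ j * (of_nat (Poly_Mapping.lookup M i choose j) :: real)"
    for M j
  txt \<open>Every monomial of reflect_var i f lies below a monomial of f, so only L itself
    contributes to the coefficient of L.\<close>
  have hits: "Poly_Mapping.update i 0 M + Poly_Mapping.single i j = L \<longleftrightarrow>
      M = L \<and> j = Poly_Mapping.lookup L i"
    if M: "M \<in> Poly_Mapping.keys f" and j: "j \<le> Poly_Mapping.lookup M i" for M j
  proof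
    assume eq: "Poly_Mapping.update i 0 M + Poly_Mapping.single i j = L"
    have mons: "Poly_Mapping.keys f \<subseteq> mons n" using assms(2) by (simp add: polys_def)
    have "le L M"
      using term_order_decrease_exponent_le[OF assms(1) _ assms(3) j] M mons eq by auto
    then have "M = L" using term_order_antisym[OF assms(1)] M L mons by blast
    moreover have "j = Poly_Mapping.lookup L i"
      using arg_cong[OF eq, of "\<lambda>m. Poly_Mapping.lookup m i"]
      by (simp add: lookup_add lookup_update)
    ultimately show "M = L \<and> j = Poly_Mapping.lookup L i" ..
  qed (simp add: update_zero_add_single_lookup)
  have "Poly_Mapping.lookup (reflect_var i f) L =
      (\<Sum>M\<in>Poly_Mapping.keys f. \<Sum>j\<le>Poly_Mapping.lookup M i.
        (c M j when Poly_Mapping.update i 0 M + Poly_Mapping.single i j = L))"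
    unfolding reflect_var_def c_def by (simp add: lookup_sum lookup_single)
  also have "\<dots> = (\<Sum>M\<in>Poly_Mapping.keys f. if M = L then c L (Poly_Mapping.lookup L i) else 0)"
    using hits by (intro sum.cong refl) (auto simp: when_def if_distrib cong: if_cong)
  also have "\<dots> = c L (Poly_Mapping.lookup L i)"
    using L(1) by simp
  finally show ?thesis by (simp add: c_def)
qed

lemma lead_mon_reflect_var:
  assumes "term_order n le" "f \<in> polys n" "f \<noteq> 0" "i < n"
  shows "reflect_var i f \<noteq> 0" and "lead_mon le (reflect_var i f) = lead_mon le f"
proof -
  have mons: "Poly_Mapping.keys f \<subseteq> mons n" using assms(2) by (simp add: polys_def)
  obtain L where L: "L \<in> Poly_Mapping.keys f" "\<forall>m\<in>Poly_Mapping.keys f. le m L"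
    using term_order_ex_max[OF assms(1) finite_keys _ mons] assms(3) by auto
  have L_mons: "L \<in> mons n" using L(1) mons by blast
  have L_key: "L \<in> Poly_Mapping.keys (reflect_var i f)"
    using lookup_reflect_var_lead[OF assms(1,2,4) L] L(1) by (simp add: in_keys_iff)
  have reflect_mons: "Poly_Mapping.keys (reflect_var i f) \<subseteq> mons n"
    using reflect_var_in_polys[OF assms(2,4)] by (simp add: polys_def)
  have "le m L" if m_key: "m \<in> Poly_Mapping.keys (reflect_var i f)" for m
  proof -
    obtain M j where M: "M \<in> Poly_Mapping.keys f" "j \<le> Poly_Mapping.lookup M i"
      and m: "m = Poly_Mapping.update i 0 M + Poly_Mapping.single i j"
      using keys_reflect_var[of i f] m_key by blast
    have "le m M"
      unfolding m using term_order_decrease_exponent_le[OF assms(1) _ assms(4) M(2)] M(1) mons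
      by blast
    moreover have "le M L" using L(2) M(1) by blast
    ultimately show "le m L"
      using term_order_trans[OF assms(1) _ _ L_mons] m_key reflect_mons M(1) mons by blast
  qed
  then have "lead_mon le (reflect_var i f) = L"
    using lead_mon_eqI[OF assms(1) reflect_mons L_key] by blast
  moreover have "lead_mon le f = L" using lead_mon_eqI[OF assms(1) mons L] .
  ultimately show "lead_mon le (reflect_var i f) = lead_mon le f" by simp
  show "reflect_var i f \<noteq> 0" using L_key by auto
qed

lemma refl_T_refl_T [simp]: "refl_T i (refl_T i v) = v"
  by (simp add: refl_T_def)

lemma reflect_var_in_vanishing_ideal:
  assumes "f \<in> vanishing_ideal n V" "i < n"
  shows "reflect_var i f \<in> vanishing_ideal n (refl_T i ` V)"
  using assms reflect_var_in_polys by (auto simp: vanishing_ideal_def eval_reflect_var)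

lemma lead_mons_vanishing_ideal_refl_T_subset:
  assumes "term_order n le" "i < n"
  shows "{Poly_Mapping.single (lead_mon le p) 1 | p. p \<in> vanishing_ideal n V \<and> p \<noteq> 0}
    \<subseteq> {Poly_Mapping.single (lead_mon le p) 1 | p. p \<in> vanishing_ideal n (refl_T i ` V) \<and> p \<noteq> 0}"
proof clarify
  fix f assume f: "f \<in> vanishing_ideal n V" "f \<noteq> 0"
  then have "f \<in> polys n" by (simp add: vanishing_ideal_def)
  with f show "\<exists>p. Poly_Mapping.single (lead_mon le f) 1 = Poly_Mapping.single (lead_mon le p) 1 \<and>
      p \<in> vanishing_ideal n (refl_T i ` V) \<and> p \<noteq> 0"
    by (intro exI[of _ "reflect_var i f"])
      (simp add: lead_mon_reflect_var[OF assms(1) _ _ assms(2)] reflect_var_in_vanishing_ideal assms(2))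
qed

lemma initial_ideal_vanishing_ideal_refl_T:
  assumes "term_order n le" "i < n"
  shows "initial_ideal n le (vanishing_ideal n (refl_T i ` V)) =
    initial_ideal n le (vanishing_ideal n V)"
proof -
  have "refl_T i ` refl_T i ` V = V" by (simp add: image_image)
  then have
    "{Poly_Mapping.single (lead_mon le p) 1 | p. p \<in> vanishing_ideal n (refl_T i ` V) \<and> p \<noteq> 0}
    = {Poly_Mapping.single (lead_mon le p) 1 | p. p \<in> vanishing_ideal n V \<and> p \<noteq> 0}"
    using lead_mons_vanishing_ideal_refl_T_subset[OF assms, of V]
      lead_mons_vanishing_ideal_refl_T_subset[OF assms, of "refl_T i ` V"]
    by (intro subset_antisym) simp_all
  then show ?thesis unfolding initial_ideal_def by (rule arg_cong)
qed

theorem lemma2p7: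
  fixes n :: nat and V :: "(nat \<Rightarrow> real) set" and le :: "mon \<Rightarrow> mon \<Rightarrow> bool"
  assumes "V \<subseteq> cube n"
    and "term_order n le"
  shows "\<forall>i < n. S_set n le V = S_set n le (refl_T i ` V)"
  using initial_ideal_vanishing_ideal_refl_T[OF assms(2)] by (simp add: S_set_def)

end
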